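(* For integers $2\le k\le n-1$ and $0\le h\le n-k$, $\kappa_s^{(h)}(S_{n,k})$ exists and $\kappa_s^{(h)}(S_{n,k})\le n+h(k-2)-1$.
   Context: For integers $1\le k\le n-1$, let $I_n=\{1,\dots,n\}$ and $P(n,k)$ the set of $k$-permutations $p_1p_2\cdots p_k$ of distinct elements of $I_n$. The $(n,k)$-star graph $S_{n,k}$ has vertex set $P(n,k)$; a vertex $p=p_1p_2\cdots p_k$ is adjacent to (a) each vertex obtained by swapping $p_1$ with $p_i$ for $2\le i\le k$, and (b) each vertex $\alpha p_2\cdots p_k$ with $\alpha\in I_n\setminus\{p_1,\dots,p_k\}$. For a connected graph $G$ and integer $h\ge 0$, a set $S\subseteq V(G)$ is an $h$-cut ($h$-super vertex-cut) if $G-S$ is disconnected and has minimum degree at least $h$; the $h$-super connectivity $\kappa_s^{(h)}(G)$ is the minimum cardinality of an $h$-cut of $G$. Note $\kappa_s^{(0)}(G)=\kappa(G)$. *)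

theory Defs
  imports Main
begin

definition connected_graph :: "'a set \<Rightarrow> ('a \<Rightarrow> 'a \<Rightarrow> bool) \<Rightarrow> bool" where
  "connected_graph V E \<longleftrightarrow>
     (\<forall>u\<in>V. \<forall>v\<in>V. (\<lambda>x y. x \<in> V \<and> y \<in> V \<and> E x y)\<^sup>*\<^sup>* u v)"

text \<open>Vertex deletion G - S (induced subgraph on V - S) is represented by the vertex set V - S
  with the same adjacency relation (connectivity is computed inside V - S).\<close>

definition degree_in :: "'a set \<Rightarrow> ('a \<Rightarrow> 'a \<Rightarrow> bool) \<Rightarrow> 'a \<Rightarrow> nat" where
  "degree_in V E v = card {u \<in> V. E v u}"

definition min_degree_ge :: "'a set \<Rightarrow> ('a \<Rightarrow> 'a \<Rightarrow> bool) \<Rightarrow> nat \<Rightarrow> bool" where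
  "min_degree_ge V E h \<longleftrightarrow> (\<forall>v\<in>V. h \<le> degree_in V E v)"

definition h_cut :: "'a set \<Rightarrow> ('a \<Rightarrow> 'a \<Rightarrow> bool) \<Rightarrow> nat \<Rightarrow> 'a set \<Rightarrow> bool" where
  "h_cut V E h S \<longleftrightarrow> S \<subseteq> V \<and> \<not> connected_graph (V - S) E \<and> min_degree_ge (V - S) E h"

text \<open>h-super connectivity: minimum cardinality of an h-cut (meaningful when an h-cut exists).\<close>
definition super_conn :: "'a set \<Rightarrow> ('a \<Rightarrow> 'a \<Rightarrow> bool) \<Rightarrow> nat \<Rightarrow> nat" where
  "super_conn V E h = Min {card S | S. h_cut V E h S}"

text \<open>(n,k)-star graph. Vertices: k-permutations of {1..n} as lists (index 0 = p_1).\<close>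
definition kperms :: "nat \<Rightarrow> nat \<Rightarrow> nat list set" where
  "kperms n k = {p. length p = k \<and> distinct p \<and> set p \<subseteq> {1..n}}"

definition star_adj :: "nat \<Rightarrow> nat \<Rightarrow> nat list \<Rightarrow> nat list \<Rightarrow> bool" where
  "star_adj n k p q \<longleftrightarrow> p \<in> kperms n k \<and> q \<in> kperms n k \<and>
     ((\<exists>i\<in>{1..<k}. q = p[0 := p ! i, i := p ! 0]) \<or>
      (\<exists>a\<in>{1..n} - set p. q = a # tl p))"

end

theory Submission
  imports Defs
begin

(* Write T = [1..<k] for the tail 1 2 ... k-1 and let X be the block of the h + 1
   vertices a # T with k <= a <= k + h; they pairwise differ only in the head, so X is a
   clique. Let S be the outer neighbourhood of X (neighbours of X outside X).
   - Removing the outer neighbourhood of any vertex set X cuts X off from every vertex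
     outside X and S (a general graph fact), and Suc k # k # [2..<k] is such a vertex.
   - Vertices of X keep their h clique neighbours. A vertex outside X and S has degree
     n - 1 in S(n,k); it loses at most one neighbour to S if its tail is a shifted tail
     T[i := a], and otherwise loses none of its n - k "clique" neighbours. Its elements are c # T (k + h < c <= n) or Suc i # T[i := a],
   so |S| <= (n - k - h) + (k - 1)(h + 1) = n + h(k - 2) - 1, which bounds the minimum. *)

definition outer_nbhd :: "'a set \<Rightarrow> ('a \<Rightarrow> 'a \<Rightarrow> bool) \<Rightarrow> 'a set \<Rightarrow> 'a set" where
  "outer_nbhd V E X = {u \<in> V. \<exists>x\<in>X. E x u} - X"

lemma card_le_degree_in:
  assumes "finite V" and "B \<subseteq> V" and "\<And>u. u \<in> B \<Longrightarrow> E v u"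
  shows "card B \<le> degree_in V E v"
  unfolding degree_in_def using assms by (intro card_mono) auto

lemma super_conn_le_card:
  assumes "finite V" and "h_cut V E h S"
  shows "super_conn V E h \<le> card S"
  unfolding super_conn_def
proof (rule Min_le)
  have "{card S |S. h_cut V E h S} \<subseteq> card ` Pow V" by (auto simp: h_cut_def)
  then show "finite {card S |S. h_cut V E h S}"
    using assms(1) by (meson finite_Pow_iff finite_imageI finite_subset)
  show "card S \<in> {card S |S. h_cut V E h S}" using assms(2) by auto
qed

text \<open>Deleting the outer neighbourhood of X leaves X closed under adjacency, so X is
  disconnected from any remaining vertex outside X.\<close>

lemma outer_nbhd_disconnects:
  assumes "x \<in> X" and "X \<subseteq> V" and "r \<in> V - X - outer_nbhd V E X"
  shows "\<not> connected_graph (V - outer_nbhd V E X) E"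
proof
  let ?S = "outer_nbhd V E X"
  let ?P = "\<lambda>a b. a \<in> V - ?S \<and> b \<in> V - ?S \<and> E a b"
  have closed: "z \<in> X" if "?P\<^sup>*\<^sup>* a z" and "a \<in> X" for a z
    using that by (induction rule: rtranclp_induct) (auto simp: outer_nbhd_def)
  assume "connected_graph (V - ?S) E"
  moreover have "x \<in> V - ?S" using assms(1,2) by (auto simp: outer_nbhd_def)
  ultimately have "?P\<^sup>*\<^sup>* x r" using assms(3) unfolding connected_graph_def by blast
  then show False using closed assms(1,3) by blast
qed

lemma kperms_Cons_iff:
  "x # t \<in> kperms n k \<longleftrightarrow>
     length t = k - 1 \<and> 0 < k \<and> x \<notin> set t \<and> distinct t \<and> x \<in> {1..n} \<and> set t \<subseteq> {1..n}"
  by (auto simp: kperms_def)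

lemma finite_kperms: "finite (kperms n k)"
proof -
  have "kperms n k \<subseteq> {xs. set xs \<subseteq> {1..n} \<and> length xs = k}" by (auto simp: kperms_def)
  then show ?thesis by (rule finite_subset) (rule finite_lists_length_eq, simp)
qed

lemma star_adj_Cons_iff:
  "star_adj n k (x # t) q \<longleftrightarrow> x # t \<in> kperms n k \<and> q \<in> kperms n k \<and>
     ((\<exists>i<k - 1. q = t ! i # t[i := x]) \<or> (\<exists>b\<in>{1..n} - set (x # t). q = b # t))"
proof -
  have "(\<exists>j\<in>{1..<k}. q = (x # t)[0 := (x # t) ! j, j := (x # t) ! 0]) \<longleftrightarrow>
        (\<exists>i<k - 1. q = t ! i # t[i := x])"
  proof
    assume "\<exists>j\<in>{1..<k}. q = (x # t)[0 := (x # t) ! j, j := (x # t) ! 0]"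
    then obtain j where j: "j \<in> {1..<k}" "q = (x # t)[0 := (x # t) ! j, j := (x # t) ! 0]" by blast
    then obtain i where "j = Suc i" by (cases j) auto
    with j show "\<exists>i<k - 1. q = t ! i # t[i := x]" by (intro exI[of _ i]) auto
  next
    assume "\<exists>i<k - 1. q = t ! i # t[i := x]"
    then obtain i where "i < k - 1" "q = t ! i # t[i := x]" by blast
    then show "\<exists>j\<in>{1..<k}. q = (x # t)[0 := (x # t) ! j, j := (x # t) ! 0]"
      by (intro bexI[of _ "Suc i"]) auto
  qed
  then show ?thesis unfolding star_adj_def by auto
qed

definition clique_nbrs :: "nat \<Rightarrow> nat \<Rightarrow> nat list \<Rightarrow> nat list set" where
  "clique_nbrs n x t = (\<lambda>b. b # t) ` ({1..n} - set (x # t))"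

definition swap_nbrs :: "nat \<Rightarrow> nat \<Rightarrow> nat list \<Rightarrow> nat list set" where
  "swap_nbrs k x t = (\<lambda>i. t ! i # t[i := x]) ` {..<k - 1}"

lemma star_neighbours:
  assumes "x # t \<in> kperms n k"
  defines "N \<equiv> clique_nbrs n x t \<union> swap_nbrs k x t"
  shows "N \<subseteq> kperms n k" and "\<And>u. u \<in> N \<Longrightarrow> star_adj n k (x # t) u"
    and "card (clique_nbrs n x t) = n - k" and "card N = n - 1"
proof -
  from assms(1) have t: "length t = k - 1" "x \<notin> set t" "distinct t" "x \<in> {1..n}" "set t \<subseteq> {1..n}" "0 < k"
    by (auto simp: kperms_Cons_iff)
  show sub: "N \<subseteq> kperms n k"
  proof
    fix u assume "u \<in> N"
    then consider (clique) b where "b \<in> {1..n} - set (x # t)" "u = b # t"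
      | (swap) i where "i < k - 1" "u = t ! i # t[i := x]"
      unfolding N_def clique_nbrs_def swap_nbrs_def by blast
    then show "u \<in> kperms n k"
    proof cases
      case clique
      then show ?thesis using t by (auto simp: kperms_Cons_iff)
    next
      case swap
      then have "t ! i \<in> set t" using t(1) by simp
      then have "t ! i \<in> {1..n}" using t(5) by blast
      moreover have "set (t[i := x]) = insert x (set t - {t ! i})"
        using swap t by (simp add: set_update_distinct)
      ultimately show ?thesis
        using swap t \<open>t ! i \<in> set t\<close> by (auto simp: kperms_Cons_iff distinct_list_update)
    qed
  qed
  then show "\<And>u. u \<in> N \<Longrightarrow> star_adj n k (x # t) u"
    using assms(1) by (auto simp: N_def clique_nbrs_def swap_nbrs_def star_adj_Cons_iff)
  have "card (clique_nbrs n x t) = card ({1..n} - set (x # t))"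
    unfolding clique_nbrs_def by (subst card_image) (auto simp: inj_on_def)
  also have "\<dots> = n - k"
    using t by (subst card_Diff_subset) (auto simp: distinct_card)
  finally show clique: "card (clique_nbrs n x t) = n - k" .
  have "card (swap_nbrs k x t) = k - 1"
    unfolding swap_nbrs_def using t by (subst card_image) (auto simp: inj_on_def nth_eq_iff_index_eq)
  moreover have "k \<le> n"
    using t card_mono[of "{1..n}" "set (x # t)"] by (simp add: distinct_card)
  moreover have "clique_nbrs n x t \<inter> swap_nbrs k x t = {}"
    using t by (auto simp: clique_nbrs_def swap_nbrs_def)
  ultimately show "card N = n - 1"
    using clique t(6) unfolding N_def
    by (subst card_Un_disjoint) (auto simp: clique_nbrs_def swap_nbrs_def)
qed

definition base_block :: "nat \<Rightarrow> nat \<Rightarrow> nat list set" where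
  "base_block k h = (\<lambda>a. a # [1..<k]) ` {k..k + h}"

definition block_cut :: "nat \<Rightarrow> nat \<Rightarrow> nat \<Rightarrow> nat list set" where
  "block_cut n k h = outer_nbhd (kperms n k) (star_adj n k) (base_block k h)"

lemma nth_shifted_tail:
  assumes "i < k - 1" and "j < k - 1"
  shows "[1..<k][i := a] ! j = (if j = i then a else Suc j)"
  using assms by (simp add: nth_list_update)

lemma base_block_kperms:
  assumes "k + h \<le> n" and "0 < k"
  shows "base_block k h \<subseteq> kperms n k"
  using assms by (auto simp: base_block_def kperms_Cons_iff)

lemma block_cut_form:
  assumes "u \<in> block_cut n k h"
  shows "(\<exists>c\<in>{k + h + 1..n}. u = c # [1..<k]) \<or>
         (\<exists>i<k - 1. \<exists>a\<in>{k..k + h}. u = Suc i # [1..<k][i := a])"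
proof -
  from assms obtain a where a: "a \<in> {k..k + h}" "star_adj n k (a # [1..<k]) u"
      and "u \<notin> base_block k h"
    by (auto simp: block_cut_def outer_nbhd_def base_block_def)
  then have "(\<exists>i<k - 1. u = Suc i # [1..<k][i := a]) \<or> (\<exists>c\<in>{1..n} - set (a # [1..<k]). u = c # [1..<k])"
    by (auto simp: star_adj_Cons_iff)
  moreover have "c \<in> {k + h + 1..n}" if "c \<in> {1..n} - set (a # [1..<k])" "u = c # [1..<k]" for c
    using that \<open>u \<notin> base_block k h\<close> by (auto simp: base_block_def)
  ultimately show ?thesis using a(1) by blast
qed

lemma card_block_cut:
  assumes "2 \<le> k" and "k + h \<le> n"
  shows "card (block_cut n k h) \<le> n + h * (k - 2) - 1"
proof -
  let ?C = "(\<lambda>c. c # [1..<k]) ` {k + h + 1..n}"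
  let ?D = "(\<lambda>(i, a). Suc i # [1..<k][i := a]) ` ({..<k - 1} \<times> {k..k + h})"
  have "block_cut n k h \<subseteq> ?C \<union> ?D" using block_cut_form by fastforce
  then have "card (block_cut n k h) \<le> card (?C \<union> ?D)" by (intro card_mono) auto
  also have "\<dots> \<le> card ?C + card ?D" by (rule card_Un_le)
  also have "\<dots> \<le> card {k + h + 1..n} + card ({..<k - 1} \<times> {k..k + h})"
    by (intro add_mono card_image_le) auto
  also have "\<dots> = (n - k - h) + (k - 1) * (h + 1)" by (simp add: card_cartesian_product)
  also have "\<dots> = n + h * (k - 2) - 1"
  proof -
    obtain k' where k': "k = k' + 2" using assms(1) by (metis add.commute le_Suc_ex)
    obtain m where m: "n = k + h + m" using assms(2) by (metis le_Suc_ex)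
    show ?thesis unfolding m k' by (simp add: algebra_simps)
  qed
  finally show ?thesis .
qed

lemma base_block_degree:
  assumes "x \<in> base_block k h" and "k + h \<le> n" and "0 < k"
  shows "h \<le> degree_in (kperms n k - block_cut n k h) (star_adj n k) x"
proof -
  from assms(1) obtain a where a: "a \<in> {k..k + h}" "x = a # [1..<k]" by (auto simp: base_block_def)
  let ?B = "(\<lambda>b. b # [1..<k]) ` ({k..k + h} - {a})"
  have "card ?B = h" using a(1) by (subst card_image) (auto simp: inj_on_def)
  moreover have "card ?B \<le> degree_in (kperms n k - block_cut n k h) (star_adj n k) x"
  proof (rule card_le_degree_in)
    show "?B \<subseteq> kperms n k - block_cut n k h"
      using base_block_kperms[OF assms(2,3)]
      by (auto simp: base_block_def block_cut_def outer_nbhd_def)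
    show "star_adj n k x u" if "u \<in> ?B" for u
      using that a base_block_kperms[OF assms(2,3)] assms(2,3)
      by (auto simp: star_adj_Cons_iff base_block_def)
  qed (simp add: finite_kperms)
  ultimately show ?thesis by simp
qed

text \<open>Every comparison is settled at position i, where the shifted tail
  carries a \<ge> k while the tails occurring in the cut carry Suc i or their own entry.\<close>

lemma shifted_swap_not_in_cut:
  assumes i: "i < k - 1" and a: "a \<in> {k..k + h}" and j: "j < k - 1"
  shows "[1..<k][i := a] ! j # ([1..<k][i := a])[j := y] \<notin> block_cut n k h"
proof
  let ?t = "[1..<k][i := a]"
  assume cut: "?t ! j # ?t[j := y] \<in> block_cut n k h"
  have at_i: "?t ! i = a" using i by simp
  have small: "Suc i < a" using i a by auto
  have tj: "?t ! j = (if j = i then a else Suc j)" using nth_shifted_tail[OF i j] .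
  from block_cut_form[OF cut] show False
  proof
    assume "\<exists>c\<in>{k + h + 1..n}. ?t ! j # ?t[j := y] = c # [1..<k]"
    then obtain c where c: "c > k + h" "?t ! j = c" "?t[j := y] = [1..<k]" by auto
    show False
    proof (cases "j = i")
      case True then show False using c tj a by simp
    next
      case False
      then have "?t[j := y] ! i = a" using at_i by simp
      then show False using c(3) i small by simp
    qed
  next
    assume "\<exists>i'<k - 1. \<exists>a'\<in>{k..k + h}. ?t ! j # ?t[j := y] = Suc i' # [1..<k][i' := a']"
    then obtain i' a' where c: "i' < k - 1" "?t ! j = Suc i'" "?t[j := y] = [1..<k][i' := a']"
      by auto
    show False
    proof (cases "j = i")
      case True then show False using c(1,2) tj a by auto
    next
      case False
      then have "i' \<noteq> i" using c(2) tj by simp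
      have "?t[j := y] ! i = a" using False at_i by simp
      then show False using c(3) \<open>i' \<noteq> i\<close> i small by simp
    qed
  qed
qed

lemma shifted_cut_neighbour:
  assumes i: "i < k - 1" and a: "a \<in> {k..k + h}"
    and adj: "star_adj n k (y # [1..<k][i := a]) u" and cut: "u \<in> block_cut n k h"
  shows "u = Suc i # [1..<k][i := a]"
proof -
  let ?t = "[1..<k][i := a]"
  have at_i: "?t ! i = a" using i by simp
  have small: "Suc i < a" using i a by auto
  from adj have "(\<exists>j<k - 1. u = ?t ! j # ?t[j := y]) \<or> (\<exists>b. u = b # ?t)"
    by (auto simp: star_adj_Cons_iff)
  then obtain b where b: "u = b # ?t"
    using shifted_swap_not_in_cut[OF i a] cut by blast
  from block_cut_form[OF cut] show ?thesis
  proof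
    assume "\<exists>c\<in>{k + h + 1..n}. u = c # [1..<k]"
    then have "?t ! i = [1..<k] ! i" using b by auto
    then show ?thesis using at_i i small by simp
  next
    assume "\<exists>i'<k - 1. \<exists>a'\<in>{k..k + h}. u = Suc i' # [1..<k][i' := a']"
    then obtain i' a' where c: "i' < k - 1" "b = Suc i'" "?t = [1..<k][i' := a']" using b by auto
    have "i' = i"
    proof (rule ccontr)
      assume "i' \<noteq> i"
      then have "[1..<k][i' := a'] ! i = Suc i" using i by simp
      then show False using c(3) at_i small by simp
    qed
    then show ?thesis using b c by simp
  qed
qed

text \<open>A vertex outside block and cut whose tail is not a shifted block tail keeps all its
  clique neighbours: a clique neighbour in the cut would force the tail to be [1..<k], and
  then the vertex would lie in the block or be adjacent to k # [1..<k].\<close>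

lemma clique_nbrs_avoid_cut:
  assumes v: "y # t \<in> kperms n k - block_cut n k h - base_block k h"
    and n: "k + h \<le> n"
    and unshifted: "\<not> (\<exists>i<k - 1. \<exists>a\<in>{k..k + h}. t = [1..<k][i := a])"
  shows "clique_nbrs n y t \<inter> block_cut n k h = {}"
proof (rule ccontr)
  assume "clique_nbrs n y t \<inter> block_cut n k h \<noteq> {}"
  then obtain b where "b # t \<in> block_cut n k h" by (auto simp: clique_nbrs_def)
  from block_cut_form[OF this] have tail: "t = [1..<k]" using unshifted by auto
  have k: "0 < k" "k # [1..<k] \<in> base_block k h" using v by (auto simp: kperms_def base_block_def)
  show False
  proof (cases "y \<in> {k..k + h}")
    case True
    then show False using v tail by (auto simp: base_block_def)
  next
    case False
    then have "star_adj n k (k # [1..<k]) (y # t)"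
      using v k n tail base_block_kperms[OF n k(1)] by (auto simp: star_adj_Cons_iff kperms_Cons_iff)
    then show False using v k(2) by (auto simp: block_cut_def outer_nbhd_def)
  qed
qed

text \<open>Vertices outside block and cut keep degree at least n - 2 or n - k, hence at least h.\<close>

lemma outside_block_degree:
  assumes v: "v \<in> kperms n k - block_cut n k h - base_block k h"
    and k: "2 \<le> k" and n: "k + h \<le> n"
  shows "h \<le> degree_in (kperms n k - block_cut n k h) (star_adj n k) v"
proof -
  let ?W = "kperms n k - block_cut n k h"
  obtain y t where yt: "v = y # t" using v k by (cases v) (auto simp: kperms_def)
  let ?N = "clique_nbrs n y t \<union> swap_nbrs k y t"
  have vV: "y # t \<in> kperms n k" using v yt by simp
  note nbrs = star_neighbours[OF vV]
  have deg: "card B \<le> degree_in ?W (star_adj n k) v" if "B \<subseteq> ?N" "B \<inter> block_cut n k h = {}" for B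
    using that nbrs(1,2) yt by (intro card_le_degree_in) (auto simp: finite_kperms)
  show ?thesis
  proof (cases "\<exists>i<k - 1. \<exists>a\<in>{k..k + h}. t = [1..<k][i := a]")
    case True
    then obtain i a where i: "i < k - 1" "a \<in> {k..k + h}" "t = [1..<k][i := a]" by blast
    have "(?N - {Suc i # t}) \<inter> block_cut n k h = {}"
      using shifted_cut_neighbour[OF i(1,2)] nbrs(2) i(3) by blast
    then have "card (?N - {Suc i # t}) \<le> degree_in ?W (star_adj n k) v" by (intro deg) auto
    moreover have "n - 2 \<le> card (?N - {Suc i # t})"
      using nbrs(4) card_Diff_singleton_if[of ?N "Suc i # t"] by auto
    ultimately show ?thesis using k n by linarith
  next
    case False
    then have "card (clique_nbrs n y t) \<le> degree_in ?W (star_adj n k) v"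
      using clique_nbrs_avoid_cut[OF v[unfolded yt] n] by (intro deg) auto
    then show ?thesis using nbrs(3) n by linarith
  qed
qed

text \<open>The vertex Suc k # k # [2..<k] lies neither in the block nor in its cut, so the cut
  separates it from the block.\<close>

lemma block_cut_is_h_cut:
  assumes k: "2 \<le> k" and n: "k + h \<le> n" "k < n"
  shows "h_cut (kperms n k) (star_adj n k) h (block_cut n k h)"
  unfolding h_cut_def
proof (intro conjI)
  let ?r = "Suc k # k # [2..<k]"
  have differs: "k # [2..<k] \<noteq> [1..<k]"
    using k upt_conv_Cons[of 1 k] by simp
  have block: "k # [1..<k] \<in> base_block k h" "base_block k h \<subseteq> kperms n k"
    using base_block_kperms[OF n(1)] k by (auto simp: base_block_def)
  have "?r \<in> kperms n k" using k n by (auto simp: kperms_def)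
  moreover have "?r \<notin> base_block k h" using differs by (auto simp: base_block_def)
  moreover have "?r \<notin> block_cut n k h"
  proof
    assume "?r \<in> block_cut n k h"
    from block_cut_form[OF this] show False using differs by auto
  qed
  ultimately show "\<not> connected_graph (kperms n k - block_cut n k h) (star_adj n k)"
    using outer_nbhd_disconnects[OF block] unfolding block_cut_def by blast
  have "0 < k" using k by simp
  show "min_degree_ge (kperms n k - block_cut n k h) (star_adj n k) h"
    unfolding min_degree_ge_def
  proof
    fix v assume "v \<in> kperms n k - block_cut n k h"
    then show "h \<le> degree_in (kperms n k - block_cut n k h) (star_adj n k) v"
      using base_block_degree[OF _ n(1) \<open>0 < k\<close>] outside_block_degree[OF _ k n(1)] by blast
  qed
  show "block_cut n k h \<subseteq> kperms n k" by (auto simp: block_cut_def outer_nbhd_def)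
qed

theorem lemma3p1:
  fixes n k h :: nat
  assumes "2 \<le> k" and "k \<le> n - 1" and "h \<le> n - k"
  shows "(\<exists>S. h_cut (kperms n k) (star_adj n k) h S) \<and>
         super_conn (kperms n k) (star_adj n k) h \<le> n + h * (k - 2) - 1"
proof -
  have k: "2 \<le> k" and n: "k + h \<le> n" "k < n" using assms by auto
  note cut = block_cut_is_h_cut[OF k n]
  have "super_conn (kperms n k) (star_adj n k) h \<le> card (block_cut n k h)"
    using super_conn_le_card[OF finite_kperms cut] .
  also have "\<dots> \<le> n + h * (k - 2) - 1" using card_block_cut[OF k n(1)] .
  finally show ?thesis using cut by blast
qed

end
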